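(* Let $\Gamma$ be a compact metric graph with edge lengths $l_1,\dots,l_E$ and a self-adjoint one-particle Laplacian $(-\Delta_1,\mathcal{D}_1(P_1,L_1))$. Assume $L_1$ has at least one positive eigenvalue and let $L_{\max}>0$ be its largest eigenvalue. For $\eta>0$ let $-\kappa_{\min}^2(\eta)$ denote the lowest eigenvalue of $-\Delta_1(P_1,L_1)$ on the graph with edge lengths $\eta l_1,\dots,\eta l_E$ (with $P_1,L_1$ unchanged). Then $-\kappa_{\min}^2(\eta)<0$ for all sufficiently large $\eta$, and $$\lim_{\eta\to\infty}\bigl(-\kappa^2_{\min}(\eta)\bigr)=-L_{\max}^2 .$$
   Context: A compact metric graph $\Gamma$ is a finite connected graph with edges $e=1,\dots,E$, each identified with an interval $[0,l_e]$. $L^2(\Gamma)=\bigoplus_e L^2(0,l_e)$, $H^m(\Gamma)=\bigoplus_eH^m(0,l_e)$. Boundary values of $F=(f_1,\dots,f_E)$: $F_{bv}=(f_1(0),\dots,f_E(0),f_1(l_1),\dots,f_E(l_E))\in\mathbb{C}^{2E}$, $F'_{bv}=(f_1'(0),\dots,f_E'(0),-f_1'(l_1),\dots,-f_E'(l_E))$. Given an orthogonal projector $P_1$ on $\mathbb{C}^{2E}$ and a self-adjoint map $L_1$ on $\ker P_1$, $(-\Delta_1,\mathcal{D}_1(P_1,L_1))$ is the self-adjoint operator associated with the closed semi-bounded form $Q_1[F]=\sum_e\int_0^{l_e}|f_e'|^2\,\mathrm{d}x-\langle F_{bv},L_1F_{bv}\rangle$ on $\{F\in H^1(\Gamma):P_1F_{bv}=0\}$;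 it acts as $-f_e''$ on each edge, has domain $\{F\in H^2(\Gamma):P_1F_{bv}=0,\ (1-P_1)F'_{bv}+L_1(1-P_1)F_{bv}=0\}$, and has discrete spectrum bounded below. *)

theory Defs
  imports "HOL-Analysis.Analysis"
begin

(* Vectors in C^n are functions nat => complex (entries >= n irrelevant / zero),
   n x n matrices are functions nat => nat => complex. *)

definition cmv :: "nat \<Rightarrow> (nat \<Rightarrow> nat \<Rightarrow> complex) \<Rightarrow> (nat \<Rightarrow> complex) \<Rightarrow> nat \<Rightarrow> complex" where
  "cmv n A v = (\<lambda>i. if i < n then (\<Sum>j<n. A i j * v j) else 0)"

definition cinner :: "nat \<Rightarrow> (nat \<Rightarrow> complex) \<Rightarrow> (nat \<Rightarrow> complex) \<Rightarrow> complex" where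
  "cinner n u v = (\<Sum>i<n. cnj (u i) * v i)"

definition orth_proj :: "nat \<Rightarrow> (nat \<Rightarrow> nat \<Rightarrow> complex) \<Rightarrow> bool" where
  "orth_proj n P \<longleftrightarrow> (\<forall>i<n. \<forall>j<n. (\<Sum>k<n. P i k * P k j) = P i j \<and> P i j = cnj (P j i))"

definition kerP :: "nat \<Rightarrow> (nat \<Rightarrow> nat \<Rightarrow> complex) \<Rightarrow> (nat \<Rightarrow> complex) set" where
  "kerP n P = {v. (\<forall>i. n \<le> i \<longrightarrow> v i = 0) \<and> cmv n P v = (\<lambda>_. 0)}"

definition selfadj_on_ker :: "nat \<Rightarrow> (nat \<Rightarrow> nat \<Rightarrow> complex) \<Rightarrow> (nat \<Rightarrow> nat \<Rightarrow> complex) \<Rightarrow> bool" where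
  "selfadj_on_ker n P L \<longleftrightarrow>
     (\<forall>v\<in>kerP n P. cmv n L v \<in> kerP n P) \<and>
     (\<forall>v\<in>kerP n P. \<forall>w\<in>kerP n P. cinner n (cmv n L v) w = cinner n v (cmv n L w))"

definition ker_eigenvalues :: "nat \<Rightarrow> (nat \<Rightarrow> nat \<Rightarrow> complex) \<Rightarrow> (nat \<Rightarrow> nat \<Rightarrow> complex) \<Rightarrow> real set" where
  "ker_eigenvalues n P L =
     {\<mu>. \<exists>v\<in>kerP n P. v \<noteq> (\<lambda>_. 0) \<and> cmv n L v = (\<lambda>i. complex_of_real \<mu> * v i)}"

definition bv :: "nat \<Rightarrow> (nat \<Rightarrow> real) \<Rightarrow> (nat \<Rightarrow> real \<Rightarrow> complex) \<Rightarrow> nat \<Rightarrow> complex" where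
  "bv E l F = (\<lambda>i. if i < E then F i 0 else if i < 2 * E then F (i - E) (l (i - E)) else 0)"

definition dbv :: "nat \<Rightarrow> (nat \<Rightarrow> real) \<Rightarrow> (nat \<Rightarrow> real \<Rightarrow> complex) \<Rightarrow> nat \<Rightarrow> complex" where
  "dbv E l F' = (\<lambda>i. if i < E then F' i 0 else if i < 2 * E then - F' (i - E) (l (i - E)) else 0)"

definition laplacian_eigenvalue ::
  "nat \<Rightarrow> (nat \<Rightarrow> real) \<Rightarrow> (nat \<Rightarrow> nat \<Rightarrow> complex) \<Rightarrow> (nat \<Rightarrow> nat \<Rightarrow> complex) \<Rightarrow> real \<Rightarrow> bool" where
  "laplacian_eigenvalue E l P L lam \<longleftrightarrow>
    (\<exists>F F' F''.
      (\<forall>e<E. \<forall>x\<in>{0..l e}.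
         (F e has_vector_derivative F' e x) (at x within {0..l e}) \<and>
         (F' e has_vector_derivative F'' e x) (at x within {0..l e}) \<and>
         - F'' e x = complex_of_real lam * F e x) \<and>
      (\<exists>e<E. \<exists>x\<in>{0..l e}. F e x \<noteq> 0) \<and>
      cmv (2 * E) P (bv E l F) = (\<lambda>_. 0) \<and>
      (let a = bv E l F; b = dbv E l F';
           a' = (\<lambda>i. a i - cmv (2 * E) P a i);
           b' = (\<lambda>i. b i - cmv (2 * E) P b i)
       in (\<lambda>i. b' i + cmv (2 * E) L a' i) = (\<lambda>_. 0)))"

definition lowest_eigenvalue ::
  "nat \<Rightarrow> (nat \<Rightarrow> real) \<Rightarrow> (nat \<Rightarrow> nat \<Rightarrow> complex) \<Rightarrow> (nat \<Rightarrow> nat \<Rightarrow> complex) \<Rightarrow> real" where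
  "lowest_eigenvalue E l P L = Inf {lam. laplacian_eigenvalue E l P L lam}"

end

theory Submission
  imports Defs
begin

(* A negative eigenvalue -k^2 has eigenfunctions A e^{kx} + B e^{-kx} on every edge,
   so it is determined by the boundary data v = F_bv in ker P: -k^2 is an eigenvalue iff v
   solves the secular equation (1 - P) N(k) v + L v = 0, where N(k) is the Dirichlet-to-
   Neumann map of the edges with coefficients alpha = k coth(k l), beta = k / sinh(k l).
   The operator (1 - P) N(k) + L is symmetric on ker P, and its quadratic form is bounded by
   the largest eigenvalue M of L and by alpha +- beta, which both tend to k as l -> oo.
   For long edges the form is positive at k = M - eps on an eigenvector of M and negative
   definite for all k >= M + eps.  By an intermediate value argument in k there is then a
   k in [M - eps, M + eps] at which the maximum of the form over the unit sphere is 0, which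
   yields the eigenvalue -k^2; negative definiteness excludes eigenvalues below -(M + eps)^2.
   Letting eps -> 0 gives the limit. *)

definition norm2 :: "nat \<Rightarrow> (nat \<Rightarrow> complex) \<Rightarrow> real" where
  "norm2 n v = (\<Sum>i<n. (cmod (v i))\<^sup>2)"

lemma cinner_add_right: "cinner n u (\<lambda>i. v i + w i) = cinner n u v + cinner n u w"
  by (simp add: cinner_def distrib_left sum.distrib)

lemma cinner_diff_right: "cinner n u (\<lambda>i. v i - w i) = cinner n u v - cinner n u w"
  by (simp add: cinner_def right_diff_distrib sum_subtractf)

lemma cinner_scale_right: "cinner n u (\<lambda>i. c * v i) = c * cinner n u v"
  by (simp add: cinner_def sum_distrib_left mult_ac)

lemma cinner_add_left: "cinner n (\<lambda>i. v i + w i) u = cinner n v u + cinner n w u"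
  by (simp add: cinner_def distrib_right sum.distrib)

lemma cinner_diff_left: "cinner n (\<lambda>i. v i - w i) u = cinner n v u - cinner n w u"
  by (simp add: cinner_def left_diff_distrib sum_subtractf)

lemma cinner_scale_left: "cinner n (\<lambda>i. c * v i) u = cnj c * cinner n v u"
  by (simp add: cinner_def sum_distrib_left mult_ac)

lemma cinner_commute_cnj: "cnj (cinner n u v) = cinner n v u"
  by (simp add: cinner_def mult_ac)

lemma cinner_zero_right [simp]: "cinner n u (\<lambda>_. 0) = 0"
  by (simp add: cinner_def)

lemma cnj_mult_self: "cnj z * z = complex_of_real ((cmod z)\<^sup>2)"
  by (metis complex_norm_square mult.commute)

lemma cinner_self: "cinner n v v = complex_of_real (norm2 n v)"
  by (simp add: cinner_def norm2_def cnj_mult_self)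

lemma norm2_nonneg: "norm2 n v \<ge> 0"
  by (simp add: norm2_def sum_nonneg)

lemma norm2_eq_0: "norm2 n v = 0 \<longleftrightarrow> (\<forall>i<n. v i = 0)"
  unfolding norm2_def by (subst sum_nonneg_eq_0_iff) auto

lemma norm2_scale: "norm2 n (\<lambda>i. c * v i) = (cmod c)\<^sup>2 * norm2 n v"
  by (simp add: norm2_def sum_distrib_left norm_mult power_mult_distrib)

lemma norm2_eq_0_cinner: "norm2 n w = 0 \<Longrightarrow> cinner n w u = 0"
  by (simp add: norm2_eq_0 cinner_def)

lemma cmv_add: "cmv n A (\<lambda>i. v i + w i) = (\<lambda>i. cmv n A v i + cmv n A w i)"
  by (auto simp: cmv_def distrib_left sum.distrib)

lemma cmv_diff: "cmv n A (\<lambda>i. v i - w i) = (\<lambda>i. cmv n A v i - cmv n A w i)"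
  by (auto simp: cmv_def right_diff_distrib sum_subtractf)

lemma cmv_scale: "cmv n A (\<lambda>i. c * v i) = (\<lambda>i. c * cmv n A v i)"
  by (auto simp: cmv_def sum_distrib_left mult_ac)

lemma kerP_add: "v \<in> kerP n P \<Longrightarrow> w \<in> kerP n P \<Longrightarrow> (\<lambda>i. v i + w i) \<in> kerP n P"
  by (auto simp: kerP_def cmv_add fun_eq_iff)

lemma kerP_diff: "v \<in> kerP n P \<Longrightarrow> w \<in> kerP n P \<Longrightarrow> (\<lambda>i. v i - w i) \<in> kerP n P"
  by (auto simp: kerP_def cmv_diff fun_eq_iff)

lemma kerP_scale: "v \<in> kerP n P \<Longrightarrow> (\<lambda>i. c * v i) \<in> kerP n P"
  by (auto simp: kerP_def cmv_scale fun_eq_iff)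

lemma kerP_out: "v \<in> kerP n P \<Longrightarrow> n \<le> i \<Longrightarrow> v i = 0"
  by (auto simp: kerP_def)

lemma norm2_pos_kerP:
  assumes "v \<in> kerP n P" "v \<noteq> (\<lambda>_. 0)"
  shows "norm2 n v > 0"
proof -
  obtain i where i: "v i \<noteq> 0" using assms(2) by auto
  then have "i < n" using assms(1) kerP_out by (metis not_le)
  then have "norm2 n v \<noteq> 0" using i norm2_eq_0 by blast
  then show ?thesis using norm2_nonneg[of n v] by simp
qed

lemma orth_proj_hermitian:
  assumes "orth_proj n P"
  shows "cinner n u (cmv n P v) = cinner n (cmv n P u) v"
proof -
  have herm: "\<And>i j. i<n \<Longrightarrow> j<n \<Longrightarrow> cnj (P j i) = P i j"
    using assms unfolding orth_proj_def by metis
  have "cinner n (cmv n P u) v = (\<Sum>j<n. \<Sum>i<n. cnj (u i) * cnj (P j i) * v j)"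
    by (simp add: cinner_def cmv_def sum_distrib_left sum_distrib_right mult_ac)
  also have "\<dots> = (\<Sum>i<n. \<Sum>j<n. cnj (u i) * P i j * v j)"
    by (subst sum.swap) (simp add: herm)
  also have "\<dots> = cinner n u (cmv n P v)"
    by (simp add: cinner_def cmv_def sum_distrib_left mult_ac)
  finally show ?thesis by simp
qed

lemma kerP_cinner_compl:
  assumes "orth_proj n P" "v \<in> kerP n P"
  shows "cinner n v (\<lambda>i. w i - cmv n P w i) = cinner n v w"
proof -
  have "cmv n P v = (\<lambda>_. 0)" using assms(2) by (simp add: kerP_def)
  then have "cinner n v (cmv n P w) = 0"
    using orth_proj_hermitian[OF assms(1)] by (simp add: cinner_def)
  then show ?thesis by (simp add: cinner_diff_right)
qed

lemma orth_proj_idem: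
  assumes "orth_proj n P"
  shows "cmv n P (cmv n P v) = cmv n P v"
proof
  fix i
  have idem: "\<And>j. i<n \<Longrightarrow> j<n \<Longrightarrow> (\<Sum>k<n. P i k * P k j) = P i j"
    using assms unfolding orth_proj_def by blast
  show "cmv n P (cmv n P v) i = cmv n P v i"
  proof (cases "i < n")
    case True
    have "cmv n P (cmv n P v) i = (\<Sum>j<n. \<Sum>k<n. P i k * P k j * v j)"
      using True by (subst sum.swap) (simp add: cmv_def sum_distrib_left mult_ac)
    also have "\<dots> = cmv n P v i"
      using True by (simp add: idem cmv_def flip: sum_distrib_right)
    finally show ?thesis .
  qed (simp add: cmv_def)
qed

lemma compl_in_kerP:
  assumes "orth_proj n P" "\<And>i. n \<le> i \<Longrightarrow> w i = 0"
  shows "(\<lambda>i. w i - cmv n P w i) \<in> kerP n P"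
proof -
  have "cmv n P (\<lambda>i. w i - cmv n P w i) = (\<lambda>i. cmv n P w i - cmv n P (cmv n P w) i)"
    by (auto simp: cmv_def right_diff_distrib sum_subtractf)
  also have "\<dots> = (\<lambda>_. 0)" using orth_proj_idem[OF assms(1)] by simp
  finally show ?thesis using assms unfolding kerP_def by (auto simp: cmv_def)
qed

lemma nonpos_form_null_vector:
  assumes Vadd: "\<And>v w. v\<in>V \<Longrightarrow> w\<in>V \<Longrightarrow> (\<lambda>i. v i + w i) \<in> V"
    and Vscale: "\<And>v c. v\<in>V \<Longrightarrow> (\<lambda>i. c * v i) \<in> V"
    and KV: "\<And>v. v\<in>V \<Longrightarrow> K v \<in> V"
    and Klin: "\<And>v w c. v\<in>V \<Longrightarrow> w\<in>V \<Longrightarrow> K (\<lambda>i. v i + c * w i) = (\<lambda>i. K v i + c * K w i)"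
    and Ksym: "\<And>v w. v\<in>V \<Longrightarrow> w\<in>V \<Longrightarrow> cinner n v (K w) = cinner n (K v) w"
    and nonpos: "\<And>w. w\<in>V \<Longrightarrow> Re (cinner n w (K w)) \<le> 0"
    and v: "v\<in>V" and v0: "Re (cinner n v (K v)) = 0"
  shows "\<forall>i<n. K v i = 0"
proof -
  define u where "u = K v"
  have uV: "u \<in> V" using KV v u_def by simp
  define N where "N = norm2 n u"
  define c where "c = Re (cinner n u (K u))"
  have c: "c \<le> 0" using nonpos uV c_def by simp
  (* the form along the line v + t u is the quadratic polynomial 2 t N + t\<^sup>2 c *)
  have line: "2 * t * N + t\<^sup>2 * c \<le> 0" for t
  proof -
    define w where "w = (\<lambda>i. v i + complex_of_real t * u i)"
    have "K w = (\<lambda>i. K v i + complex_of_real t * K u i)"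
      using Klin v uV w_def by blast
    then have "cinner n w (K w) = cinner n v (K v) + complex_of_real t * cinner n v (K u)
        + complex_of_real t * cinner n u (K v) + complex_of_real (t\<^sup>2) * cinner n u (K u)"
      by (simp add: w_def cinner_def sum.distrib sum_distrib_left algebra_simps power2_eq_square)
    moreover have "cinner n v (K u) = cinner n u u" using Ksym[OF v uV] u_def by simp
    ultimately have "Re (cinner n w (K w)) = 2 * t * N + t\<^sup>2 * c"
      using v0 by (simp add: u_def cinner_self N_def c_def)
    moreover have "w \<in> V" using Vadd Vscale v uV w_def by blast
    ultimately show ?thesis using nonpos by metis
  qed
  have "N = 0"
  proof (rule ccontr)
    assume "N \<noteq> 0"
    then have Np: "N > 0" using norm2_nonneg[of n u] N_def by simp
    define t where "t = N / (1 - c)"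
    have tp: "t > 0" using Np c t_def by simp
    have "t * (2 * N + t * c) \<le> 0" using line[of t] by (simp add: power2_eq_square algebra_simps)
    then have "2 * N + t * c \<le> 0" using tp by (simp add: mult_le_0_iff)
    moreover have "t * c \<ge> - N" using Np c by (simp add: t_def field_simps)
    ultimately show False using Np by simp
  qed
  then show ?thesis using norm2_eq_0 N_def u_def by simp
qed

(* The unit sphere of ker P and the quadratic form of L; maximising the form over the
   (compact) sphere produces the largest eigenvalue of L on ker P. *)
definition unit_ker :: "nat \<Rightarrow> (nat \<Rightarrow> nat \<Rightarrow> complex) \<Rightarrow> (nat \<Rightarrow> complex) set" where
  "unit_ker n P = {v \<in> kerP n P. norm2 n v = 1}"

definition qform :: "nat \<Rightarrow> (nat \<Rightarrow> nat \<Rightarrow> complex) \<Rightarrow> (nat \<Rightarrow> complex) \<Rightarrow> real" where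
  "qform n L v = Re (cinner n v (cmv n L v))"

lemma continuous_on_coordinate [continuous_intros]:
  "continuous_on S (\<lambda>v::nat\<Rightarrow>complex. v i)"
  by (rule continuous_on_subset[OF continuous_on_product_coordinates]) simp

lemma continuous_on_norm2: "continuous_on S (norm2 n)"
  unfolding norm2_def[abs_def] by (intro continuous_intros)

lemma continuous_on_qform: "continuous_on S (qform n L)"
proof -
  have "qform n L = (\<lambda>v. Re (\<Sum>i<n. cnj (v i) * (\<Sum>j<n. L i j * v j)))"
    by (simp add: fun_eq_iff qform_def cinner_def cmv_def)
  then show ?thesis by (simp only:) (intro continuous_intros)
qed

lemma closed_kerP: "closed (kerP n P)"
proof -
  have "kerP n P = (\<Inter>i. {v. (n \<le> i \<longrightarrow> v i = 0) \<and> cmv n P v i = 0})"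
    by (auto simp: kerP_def fun_eq_iff)
  moreover have "closed {v::nat\<Rightarrow>complex. (n \<le> i \<longrightarrow> v i = 0) \<and> cmv n P v i = 0}" for i
    unfolding cmv_def
    by (cases "n \<le> i"; cases "i < n")
      (auto intro!: closed_Collect_conj closed_Collect_eq continuous_on_sum continuous_on_mult_left
        continuous_on_coordinate continuous_on_const)
  ultimately show ?thesis by auto
qed

lemma compact_unit_ker: "compact (unit_ker n P)"
proof -
  define B where "B = PiE UNIV (\<lambda>i::nat. if i < n then cball (0::complex) 1 else {0})"
  have "compactin (product_topology (\<lambda>i. euclidean) UNIV) B"
    unfolding B_def by (subst compactin_PiE) auto
  then have "compact B" by (simp add: euclidean_product_topology)
  moreover have "closed (kerP n P \<inter> {v. norm2 n v = 1})"
    by (intro closed_Int closed_kerP closed_Collect_eq continuous_on_norm2 continuous_on_const)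
  moreover have "unit_ker n P = B \<inter> (kerP n P \<inter> {v. norm2 n v = 1})"
  proof -
    have "cmod (v i) \<le> 1" if "norm2 n v = 1" "i < n" for v i
    proof -
      have "(cmod (v i))\<^sup>2 \<le> norm2 n v" unfolding norm2_def
        using that by (intro member_le_sum) auto
      then show ?thesis using that by (simp add: power_le_one_iff abs_square_le_1)
    qed
    then show ?thesis by (auto simp: unit_ker_def B_def PiE_iff kerP_def)
  qed
  ultimately show ?thesis by (simp add: compact_Int_closed)
qed

lemma normalize_in_unit_ker:
  assumes "v \<in> kerP n P" "norm2 n v > 0"
  shows "(\<lambda>i. complex_of_real (1 / sqrt (norm2 n v)) * v i) \<in> unit_ker n P"
  using assms norm2_scale[of n "complex_of_real (1 / sqrt (norm2 n v))" v] kerP_scale[OF assms(1)]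
  by (simp add: unit_ker_def power_divide del: of_real_divide)

lemma qform_scale: "qform n L (\<lambda>i. c * v i) = (cmod c)\<^sup>2 * qform n L v"
proof -
  have "cinner n (\<lambda>i. c * v i) (cmv n L (\<lambda>i. c * v i)) = (cnj c * c) * cinner n v (cmv n L v)"
    by (simp add: cmv_scale cinner_scale_left cinner_scale_right)
  then show ?thesis by (simp add: qform_def cnj_mult_self)
qed

lemma qform_eigenvector:
  "cmv n L v = (\<lambda>i. complex_of_real \<mu> * v i) \<Longrightarrow> qform n L v = \<mu> * norm2 n v"
  by (simp add: qform_def cinner_scale_right cinner_self)

lemma homogeneous_bound:
  assumes "v \<in> kerP n P" and hom: "\<And>c w. f (\<lambda>i. c * w i) = (cmod c)\<^sup>2 * f w"
    and zero: "norm2 n v = 0 \<Longrightarrow> f v = 0" and sphere: "\<And>u. u \<in> unit_ker n P \<Longrightarrow> f u \<le> R"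
  shows "f v \<le> R * norm2 n v"
proof (cases "norm2 n v = 0")
  case False
  then have Np: "norm2 n v > 0" using norm2_nonneg[of n v] by simp
  have "f (\<lambda>i. complex_of_real (1 / sqrt (norm2 n v)) * v i) = f v / norm2 n v"
    using Np by (subst hom) (simp add: power_divide norm_divide)
  then have "f v / norm2 n v \<le> R" using sphere[OF normalize_in_unit_ker[OF assms(1) Np]] by simp
  then show ?thesis using Np by (simp add: divide_le_eq mult.commute)
qed (simp add: zero)

lemma max_form_eigenvector:
  assumes L: "selfadj_on_ker n P L" and ne: "\<exists>v\<in>kerP n P. v \<noteq> (\<lambda>_. 0)"
  shows "\<exists>R vm. vm \<in> unit_ker n P \<and> cmv n L vm = (\<lambda>i. complex_of_real R * vm i)
              \<and> (\<forall>w\<in>kerP n P. qform n L w \<le> R * norm2 n w)"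
proof -
  have "unit_ker n P \<noteq> {}" using ne normalize_in_unit_ker norm2_pos_kerP by blast
  then obtain vm where vm: "vm \<in> unit_ker n P" "\<And>u. u \<in> unit_ker n P \<Longrightarrow> qform n L u \<le> qform n L vm"
    using continuous_attains_sup[OF compact_unit_ker _ continuous_on_qform] by blast
  define R where "R = qform n L vm"
  have bound: "qform n L w \<le> R * norm2 n w" if "w \<in> kerP n P" for w
  proof (rule homogeneous_bound[OF that qform_scale])
    show "norm2 n w = 0 \<Longrightarrow> qform n L w = 0" by (simp add: qform_def norm2_eq_0_cinner)
  qed (use vm(2) R_def in simp)
  define K where "K = (\<lambda>v. \<lambda>i. cmv n L v i - complex_of_real R * v i)"
  have LV: "cmv n L v \<in> kerP n P" if "v \<in> kerP n P" for v
    using L that unfolding selfadj_on_ker_def by blast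
  have Lsym: "cinner n (cmv n L v) w = cinner n v (cmv n L w)" if "v \<in> kerP n P" "w \<in> kerP n P" for v w
    using L that unfolding selfadj_on_ker_def by blast
  have vmk: "vm \<in> kerP n P" "norm2 n vm = 1" using vm(1) by (simp_all add: unit_ker_def)
  have "\<forall>i<n. K vm i = 0"
  proof (rule nonpos_form_null_vector[where V="kerP n P" and K=K and v=vm])
    show "Re (cinner n w (K w)) \<le> 0" if "w \<in> kerP n P" for w
      using bound[OF that] by (simp add: K_def cinner_diff_right cinner_scale_right cinner_self qform_def)
    show "Re (cinner n vm (K vm)) = 0"
      using vmk by (simp add: K_def cinner_diff_right cinner_scale_right cinner_self qform_def R_def)
    show "K v \<in> kerP n P" if "v \<in> kerP n P" for v
      unfolding K_def using that by (intro kerP_diff kerP_scale LV)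
    show "cinner n v (K w) = cinner n (K v) w" if "v \<in> kerP n P" "w \<in> kerP n P" for v w
      using that by (simp add: K_def cinner_diff_left cinner_diff_right cinner_scale_left
          cinner_scale_right Lsym)
  qed (auto simp: K_def kerP_add kerP_scale cmv_add cmv_scale algebra_simps vmk(1))
  then have "cmv n L vm = (\<lambda>i. complex_of_real R * vm i)"
    using vmk(1) by (intro ext) (auto simp: K_def cmv_def not_less kerP_def)
  then show ?thesis using vm(1) bound by blast
qed

lemma eigenvectors_orthogonal:
  assumes L: "selfadj_on_ker n P L" and "\<mu> \<noteq> \<nu>" and v: "v \<in> kerP n P" and w: "w \<in> kerP n P"
    and ev: "cmv n L v = (\<lambda>i. complex_of_real \<mu> * v i)" and ew: "cmv n L w = (\<lambda>i. complex_of_real \<nu> * w i)"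
  shows "cinner n v w = 0"
proof -
  have "cinner n (cmv n L v) w = cinner n v (cmv n L w)"
    using L v w unfolding selfadj_on_ker_def by blast
  then have "(complex_of_real \<mu> - complex_of_real \<nu>) * cinner n v w = 0"
    using ev ew by (simp add: cinner_scale_left cinner_scale_right algebra_simps)
  then show ?thesis using assms(2) by simp
qed

lemma cinner_sum_right: "cinner n x (\<lambda>j. \<Sum>a\<in>A. c a * y a j) = (\<Sum>a\<in>A. c a * cinner n x (y a))"
  unfolding cinner_def by (simp add: sum_distrib_left sum_distrib_right mult_ac sum.swap[of _ A])

lemma cinner_sum_left: "cinner n (\<lambda>j. \<Sum>a\<in>A. c a * y a j) x = (\<Sum>a\<in>A. cnj (c a) * cinner n (y a) x)"
  unfolding cinner_def by (simp add: sum_distrib_left sum_distrib_right mult_ac sum.swap[of _ A])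

lemma cinner_unit_vector:
  assumes "i < n"
  shows "cinner n (\<lambda>j. if j = i then 1 else 0) x = x i"
    and "cinner n x (\<lambda>j. if j = i then 1 else 0) = cnj (x i)"
  using assms by (simp_all add: cinner_def if_distrib if_distribR cong: if_cong)

lemma bessel_unit_vector:
  assumes A: "finite A" and ort: "\<And>a b. a \<in> A \<Longrightarrow> b \<in> A \<Longrightarrow> cinner n (u a) (u b) = (if a = b then 1 else 0)"
    and i: "i < n"
  shows "(\<Sum>a\<in>A. (cmod (u a i))\<^sup>2) \<le> 1"
proof -
  define w where "w = (\<lambda>j. (if j = i then 1 else 0) - (\<Sum>a\<in>A. cnj (u a i) * u a j))"
  have orth: "cinner n (u b) w = 0" if b: "b \<in> A" for b
  proof -
    have "(\<Sum>a\<in>A. cnj (u a i) * cinner n (u b) (u a)) = (\<Sum>a\<in>A. if b = a then cnj (u a i) else 0)"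
      using b by (intro sum.cong refl) (simp add: ort)
    then show ?thesis using A b
      by (simp add: w_def cinner_diff_right cinner_unit_vector[OF i] cinner_sum_right)
  qed
  have "cinner n w w = w i - (\<Sum>a\<in>A. u a i * cinner n (u a) w)"
    by (subst (1) w_def) (simp add: cinner_diff_left cinner_unit_vector[OF i] cinner_sum_left)
  also have "(\<Sum>a\<in>A. u a i * cinner n (u a) w) = 0" using orth by simp
  finally have "cinner n w w = 1 - (\<Sum>a\<in>A. cnj (u a i) * u a i)" by (simp add: w_def)
  then have "complex_of_real (norm2 n w) = complex_of_real (1 - (\<Sum>a\<in>A. (cmod (u a i))\<^sup>2))"
    by (simp add: cinner_self cnj_mult_self)
  then show ?thesis using norm2_nonneg[of n w] by (simp only: of_real_eq_iff)
qed

(* Distinct eigenvalues have orthonormal eigenvectors, so there are at most n of them. *)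
lemma card_eigenvalues_le:
  assumes L: "selfadj_on_ker n P L" and A: "finite A" "A \<subseteq> ker_eigenvalues n P L"
  shows "card A \<le> n"
proof -
  have "\<exists>v. v \<in> unit_ker n P \<and> cmv n L v = (\<lambda>i. complex_of_real a * v i)" if a: "a \<in> A" for a
  proof -
    obtain v where v: "v \<in> kerP n P" "v \<noteq> (\<lambda>_. 0)" "cmv n L v = (\<lambda>i. complex_of_real a * v i)"
      using A a unfolding ker_eigenvalues_def by blast
    define c where "c = complex_of_real (1 / sqrt (norm2 n v))"
    have "(\<lambda>i. c * v i) \<in> unit_ker n P"
      using normalize_in_unit_ker[OF v(1) norm2_pos_kerP[OF v(1,2)]] c_def by simp
    moreover have "cmv n L (\<lambda>i. c * v i) = (\<lambda>i. complex_of_real a * (c * v i))"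
      unfolding cmv_scale v(3) by (simp add: mult_ac)
    ultimately show ?thesis by blast
  qed
  then obtain u where u: "\<And>a. a \<in> A \<Longrightarrow> u a \<in> unit_ker n P \<and> cmv n L (u a) = (\<lambda>i. complex_of_real a * u a i)"
    by metis
  have ort: "cinner n (u a) (u b) = (if a = b then 1 else 0)" if "a \<in> A" "b \<in> A" for a b
    using u[OF that(1)] u[OF that(2)] eigenvectors_orthogonal[OF L, of a b]
    by (cases "a = b") (simp_all add: cinner_self unit_ker_def)
  have "real (card A) = (\<Sum>a\<in>A. norm2 n (u a))" using u by (simp add: unit_ker_def)
  also have "\<dots> = (\<Sum>i<n. \<Sum>a\<in>A. (cmod (u a i))\<^sup>2)" unfolding norm2_def by (rule sum.swap)
  also have "\<dots> \<le> (\<Sum>i<n. 1)" by (intro sum_mono bessel_unit_vector[OF A(1) ort]) auto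
  finally show ?thesis by simp
qed

(* Hence L has finitely many eigenvalues on ker P, and Max of them makes sense. *)
lemma finite_eigenvalues:
  assumes "selfadj_on_ker n P L"
  shows "finite (ker_eigenvalues n P L)"
proof (rule ccontr)
  assume "infinite (ker_eigenvalues n P L)"
  then obtain A where "A \<subseteq> ker_eigenvalues n P L" "finite A" "card A = Suc n"
    using infinite_arbitrarily_large by blast
  then show False using card_eigenvalues_le[OF assms, of A] by simp
qed

lemma max_eigenvalue_variational:
  assumes L: "selfadj_on_ker n P L" and ne: "ker_eigenvalues n P L \<noteq> {}"
  defines "M \<equiv> Max (ker_eigenvalues n P L)"
  shows "\<exists>vm. vm \<in> unit_ker n P \<and> cmv n L vm = (\<lambda>i. complex_of_real M * vm i)
              \<and> (\<forall>w\<in>kerP n P. qform n L w \<le> M * norm2 n w)"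
proof -
  have "\<exists>v\<in>kerP n P. v \<noteq> (\<lambda>_. 0)" using ne unfolding ker_eigenvalues_def by blast
  then obtain R vm where vm: "vm \<in> unit_ker n P" "cmv n L vm = (\<lambda>i. complex_of_real R * vm i)"
     and bound: "\<forall>w\<in>kerP n P. qform n L w \<le> R * norm2 n w"
    using max_form_eigenvector[OF L] by blast
  have "vm \<noteq> (\<lambda>_. 0)" using vm(1) by (auto simp: unit_ker_def norm2_def)
  then have "R \<in> ker_eigenvalues n P L"
    using vm unfolding ker_eigenvalues_def unit_ker_def by blast
  moreover have "\<mu> \<le> R" if mu: "\<mu> \<in> ker_eigenvalues n P L" for \<mu>
  proof -
    obtain v where v: "v \<in> kerP n P" "v \<noteq> (\<lambda>_. 0)" "cmv n L v = (\<lambda>i. complex_of_real \<mu> * v i)"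
      using mu unfolding ker_eigenvalues_def by blast
    have "\<mu> * norm2 n v \<le> R * norm2 n v" using bound v(1) qform_eigenvector[OF v(3)] by metis
    then show ?thesis using norm2_pos_kerP[OF v(1,2)] by simp
  qed
  ultimately have "M = R" unfolding M_def by (intro Max_eqI finite_eigenvalues[OF L]) auto
  then show ?thesis using vm bound by auto
qed

lemma first_order_linear_ode:
  fixes g :: "real \<Rightarrow> complex"
  assumes D: "\<And>x. x \<in> {0..ell} \<Longrightarrow> (g has_vector_derivative complex_of_real c * g x) (at x within {0..ell})"
    and x: "x \<in> {0..ell}"
  shows "g x = g 0 * complex_of_real (exp (c * x))"
proof -
  define h where "h = (\<lambda>x. g x * complex_of_real (exp (- (c * x))))"
  have "(h has_vector_derivative 0) (at y within {0..ell})" if y: "y \<in> {0..ell}" for y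
  proof -
    have "(h has_vector_derivative complex_of_real c * g y * complex_of_real (exp (- (c * y)))
        + g y * complex_of_real (exp (- (c * y)) * (- c))) (at y within {0..ell})"
      unfolding h_def by (rule derivative_eq_intros D[OF y] | simp)+
    then show ?thesis by (simp add: algebra_simps)
  qed
  then obtain k where k: "\<And>y. y \<in> {0..ell} \<Longrightarrow> h y = k"
    using has_vector_derivative_zero_constant[OF convex_real_interval(5)] by metis
  have "h x = h 0" using k x by simp
  then have "g x * complex_of_real (exp (- (c * x))) * complex_of_real (exp (c * x)) = g 0 * complex_of_real (exp (c * x))"
    by (simp add: h_def)
  then show ?thesis by (simp add: mult.assoc exp_minus flip: of_real_mult)
qed

definition exp_sol :: "real \<Rightarrow> complex \<Rightarrow> complex \<Rightarrow> real \<Rightarrow> complex" where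
  "exp_sol \<kappa> A B x = A * complex_of_real (exp (\<kappa> * x)) + B * complex_of_real (exp (- (\<kappa> * x)))"

lemma exp_sol_has_derivative:
  "(exp_sol \<kappa> A B has_vector_derivative complex_of_real \<kappa> * exp_sol \<kappa> A (- B) x) (at x within S)"
  unfolding exp_sol_def[abs_def]
  by (rule derivative_eq_intros refl | simp add: algebra_simps)+

(* Every solution of f'' = k^2 f (k > 0) on an interval is an exponential solution: the
   combinations f' + k f and f' - k f solve first order equations. *)
lemma ode_solution_exp:
  fixes f f' f'' :: "real \<Rightarrow> complex"
  assumes k: "\<kappa> > 0"
    and D: "\<And>x. x \<in> {0..ell} \<Longrightarrow> (f has_vector_derivative f' x) (at x within {0..ell})"
    and D2: "\<And>x. x \<in> {0..ell} \<Longrightarrow> (f' has_vector_derivative f'' x) (at x within {0..ell})"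
    and eq: "\<And>x. x \<in> {0..ell} \<Longrightarrow> - f'' x = complex_of_real (- (\<kappa>\<^sup>2)) * f x"
  shows "\<exists>A B. \<forall>x\<in>{0..ell}. f x = exp_sol \<kappa> A B x \<and> f' x = complex_of_real \<kappa> * exp_sol \<kappa> A (- B) x"
proof -
  define k where "k = complex_of_real \<kappa>"
  have k0: "k \<noteq> 0" using assms by (simp add: k_def)
  have f2: "f'' x = k * k * f x" if "x \<in> {0..ell}" for x
    using eq[OF that] by (simp add: k_def power2_eq_square)
  have plus: "f' x + k * f x = (f' 0 + k * f 0) * complex_of_real (exp (\<kappa> * x))" if "x \<in> {0..ell}" for x
    using that by (intro first_order_linear_ode[of ell _ \<kappa>])
      (auto intro!: derivative_eq_intros D D2 simp: f2 k_def algebra_simps)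
  have minus: "f' x - k * f x = (f' 0 - k * f 0) * complex_of_real (exp (- \<kappa> * x))" if "x \<in> {0..ell}" for x
    using that by (intro first_order_linear_ode[of ell _ "- \<kappa>"])
      (auto intro!: derivative_eq_intros D D2 simp: f2 k_def algebra_simps)
  define U where "U = f' 0 + k * f 0"
  define W where "W = f' 0 - k * f 0"
  have "f x = exp_sol \<kappa> (U / (2 * k)) (- W / (2 * k)) x
      \<and> f' x = k * exp_sol \<kappa> (U / (2 * k)) (- (- W / (2 * k))) x" if x: "x \<in> {0..ell}" for x
  proof -
    define e1 where "e1 = complex_of_real (exp (\<kappa> * x))"
    define e2 where "e2 = complex_of_real (exp (- (\<kappa> * x)))"
    have p: "f' x + k * f x = U * e1" using plus[OF x] by (simp add: U_def e1_def)
    have m: "f' x - k * f x = W * e2" using minus[OF x] by (simp add: W_def e2_def)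
    have "2 * k * f x = U * e1 - W * e2" "2 * f' x = U * e1 + W * e2"
      using p m by algebra+
    then show ?thesis using k0 by (simp add: exp_sol_def e1_def[symmetric] e2_def[symmetric] field_simps)
  qed
  then show ?thesis unfolding k_def by blast
qed

(* Dirichlet-to-Neumann coefficients of an edge of length l for f'' = k^2 f:
   alpha = k coth(k l) and beta = k / sinh(k l). *)
definition alpha :: "real \<Rightarrow> real \<Rightarrow> real" where
  "alpha k l = k * ((exp (k * l))\<^sup>2 + 1) / ((exp (k * l))\<^sup>2 - 1)"

definition beta :: "real \<Rightarrow> real \<Rightarrow> real" where
  "beta k l = 2 * k * exp (k * l) / ((exp (k * l))\<^sup>2 - 1)"

lemma exp_sol_dirichlet_to_neumann:
  assumes k: "\<kappa> > 0" and l: "ell > 0"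
  shows "complex_of_real \<kappa> * exp_sol \<kappa> A (- B) 0
           = - complex_of_real (alpha \<kappa> ell) * exp_sol \<kappa> A B 0 + complex_of_real (beta \<kappa> ell) * exp_sol \<kappa> A B ell"
    and "- (complex_of_real \<kappa> * exp_sol \<kappa> A (- B) ell)
           = complex_of_real (beta \<kappa> ell) * exp_sol \<kappa> A B 0 - complex_of_real (alpha \<kappa> ell) * exp_sol \<kappa> A B ell"
    and "exp_sol \<kappa> A B 0 = 0 \<Longrightarrow> exp_sol \<kappa> A B ell = 0 \<Longrightarrow> A = 0 \<and> B = 0"
    and "\<exists>A' B'. exp_sol \<kappa> A' B' 0 = a \<and> exp_sol \<kappa> A' B' ell = b"
proof -
  define k where "k = complex_of_real \<kappa>"
  define t where "t = complex_of_real (exp (\<kappa> * ell))"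
  define s where "s = 1 / (t * t - 1)"
  define u where "u = 1 / t"
  have T: "exp (\<kappa> * ell) > 1" using k l by simp
  then have "exp (\<kappa> * ell) * exp (\<kappa> * ell) \<noteq> 1" by (metis less_1_mult less_irrefl)
  then have t1: "t * t - 1 \<noteq> 0" unfolding t_def by (metis eq_iff_diff_eq_0 of_real_1 of_real_eq_iff of_real_mult)
  have s: "s * (t * t - 1) = 1" using t1 by (simp add: s_def)
  have u: "u * t = 1" by (simp add: u_def t_def)
  have al: "complex_of_real (alpha \<kappa> ell) = k * (t * t + 1) * s"
    by (simp add: alpha_def t_def s_def k_def power2_eq_square)
  have be: "complex_of_real (beta \<kappa> ell) = 2 * k * t * s"
    by (simp add: beta_def t_def s_def k_def power2_eq_square)
  have sol: "exp_sol \<kappa> A' B' 0 = A' + B'" "exp_sol \<kappa> A' B' ell = A' * t + B' * u" for A' B'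
    by (simp_all add: exp_sol_def t_def u_def exp_minus divide_inverse)
  show "complex_of_real \<kappa> * exp_sol \<kappa> A (- B) 0
           = - complex_of_real (alpha \<kappa> ell) * exp_sol \<kappa> A B 0 + complex_of_real (beta \<kappa> ell) * exp_sol \<kappa> A B ell"
    unfolding al be sol k_def[symmetric] using s u by algebra
  show "- (complex_of_real \<kappa> * exp_sol \<kappa> A (- B) ell)
           = complex_of_real (beta \<kappa> ell) * exp_sol \<kappa> A B 0 - complex_of_real (alpha \<kappa> ell) * exp_sol \<kappa> A B ell"
    unfolding al be sol k_def[symmetric] using s u by algebra
  show "exp_sol \<kappa> A B 0 = 0 \<Longrightarrow> exp_sol \<kappa> A B ell = 0 \<Longrightarrow> A = 0 \<and> B = 0"
    unfolding sol using s u by algebra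
  have "t - u \<noteq> 0" using s u by algebra
  then obtain c where c: "c * (t - u) = b - a * u" by (metis nonzero_eq_divide_eq)
  have "c + (a - c) = a" by simp
  moreover have "c * t + (a - c) * u = b" using c by (simp add: algebra_simps)
  ultimately show "\<exists>A' B'. exp_sol \<kappa> A' B' 0 = a \<and> exp_sol \<kappa> A' B' ell = b"
    unfolding sol by blast
qed

(* The Dirichlet-to-Neumann map of the whole graph at spectral parameter -k^2: it sends the
   boundary values of a solution of f'' = k^2 f on every edge to its inward derivatives. *)
definition dtn :: "nat \<Rightarrow> real \<Rightarrow> (nat \<Rightarrow> real) \<Rightarrow> (nat \<Rightarrow> complex) \<Rightarrow> nat \<Rightarrow> complex" where
  "dtn E \<kappa> ell v = (\<lambda>i.
      if i < E then - complex_of_real (alpha \<kappa> (ell i)) * v i + complex_of_real (beta \<kappa> (ell i)) * v (i + E)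
      else if i < 2 * E then complex_of_real (beta \<kappa> (ell (i - E))) * v (i - E)
                             - complex_of_real (alpha \<kappa> (ell (i - E))) * v i
      else 0)"

definition secular_op ::
  "nat \<Rightarrow> (nat \<Rightarrow> real) \<Rightarrow> (nat \<Rightarrow> nat \<Rightarrow> complex) \<Rightarrow> (nat \<Rightarrow> nat \<Rightarrow> complex) \<Rightarrow> real
    \<Rightarrow> (nat \<Rightarrow> complex) \<Rightarrow> nat \<Rightarrow> complex" where
  "secular_op E ell P L \<kappa> v =
     (\<lambda>i. dtn E \<kappa> ell v i - cmv (2 * E) P (dtn E \<kappa> ell v) i + cmv (2 * E) L v i)"

lemma dbv_exp_sol:
  assumes k: "\<kappa> > 0" and l: "\<forall>e<E. ell e > 0"
    and sol: "\<forall>e<E. \<forall>x\<in>{0..ell e}. F e x = exp_sol \<kappa> (A e) (B e) x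
                                 \<and> F' e x = complex_of_real \<kappa> * exp_sol \<kappa> (A e) (- B e) x"
  shows "dbv E ell F' = dtn E \<kappa> ell (bv E ell F)"
proof
  fix i
  have ends: "F e 0 = exp_sol \<kappa> (A e) (B e) 0" "F e (ell e) = exp_sol \<kappa> (A e) (B e) (ell e)"
    "F' e 0 = complex_of_real \<kappa> * exp_sol \<kappa> (A e) (- B e) 0"
    "F' e (ell e) = complex_of_real \<kappa> * exp_sol \<kappa> (A e) (- B e) (ell e)" if "e < E" for e
    using sol l that by (auto dest!: spec[of _ e] intro: less_imp_le)
  consider "i < E" | "E \<le> i" "i < 2 * E" | "2 * E \<le> i" by linarith
  then show "dbv E ell F' i = dtn E \<kappa> ell (bv E ell F) i"
  proof cases
    case 1
    then show ?thesis using exp_sol_dirichlet_to_neumann(1)[OF k, of "ell i"] l ends[OF 1]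
      by (simp add: dbv_def dtn_def bv_def)
  next
    case 2
    then obtain e where e: "e < E" "i = e + E" by (metis add.commute le_add_diff_inverse mult_2 nat_add_left_cancel_less)
    then show ?thesis using exp_sol_dirichlet_to_neumann(2)[OF k, of "ell e"] l ends[OF e(1)]
      by (simp add: dbv_def dtn_def bv_def)
  qed (simp add: dbv_def dtn_def)
qed

lemma edgewise_choice:
  assumes "\<forall>e<E. \<exists>a b. Q e a b"
  shows "\<exists>A B. \<forall>e<E. Q e (A e) (B e)"
proof -
  have "\<forall>e\<in>{..<E}. \<exists>ab. Q e (fst ab) (snd ab)" using assms by auto
  from bchoice[OF this] obtain f where "\<forall>e\<in>{..<E}. Q e (fst (f e)) (snd (f e))" ..
  then show ?thesis by (intro exI[of _ "fst \<circ> f"] exI[of _ "snd \<circ> f"]) simp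
qed

lemma eigenvalue_imp_secular:
  assumes k: "\<kappa> > 0" and l: "\<forall>e<E. ell e > 0"
    and ev: "laplacian_eigenvalue E ell P L (- (\<kappa>\<^sup>2))"
  shows "\<exists>v\<in>kerP (2 * E) P. v \<noteq> (\<lambda>_. 0) \<and> secular_op E ell P L \<kappa> v = (\<lambda>_. 0)"
proof -
  obtain F F' F'' where
    ode: "\<forall>e<E. \<forall>x\<in>{0..ell e}.
         (F e has_vector_derivative F' e x) (at x within {0..ell e}) \<and>
         (F' e has_vector_derivative F'' e x) (at x within {0..ell e}) \<and>
         - F'' e x = complex_of_real (- (\<kappa>\<^sup>2)) * F e x"
    and nz: "\<exists>e<E. \<exists>x\<in>{0..ell e}. F e x \<noteq> 0"
    and Pz: "cmv (2 * E) P (bv E ell F) = (\<lambda>_. 0)"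
    and bc: "(\<lambda>i. (dbv E ell F' i - cmv (2 * E) P (dbv E ell F') i)
              + cmv (2 * E) L (\<lambda>i. bv E ell F i - cmv (2 * E) P (bv E ell F) i) i) = (\<lambda>_. 0)"
    using ev unfolding laplacian_eigenvalue_def Let_def by blast
  have "\<forall>e<E. \<exists>A B. \<forall>x\<in>{0..ell e}. F e x = exp_sol \<kappa> A B x
                  \<and> F' e x = complex_of_real \<kappa> * exp_sol \<kappa> A (- B) x"
    using ode by (auto intro!: ode_solution_exp[OF k])
  from edgewise_choice[OF this] obtain A B where AB: "\<forall>e<E. \<forall>x\<in>{0..ell e}.
      F e x = exp_sol \<kappa> (A e) (B e) x \<and> F' e x = complex_of_real \<kappa> * exp_sol \<kappa> (A e) (- B e) x"
    by blast
  define v where "v = bv E ell F"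
  have "v \<in> kerP (2 * E) P" using Pz unfolding kerP_def v_def by (simp add: bv_def)
  moreover have "v \<noteq> (\<lambda>_. 0)"
  proof
    assume v0: "v = (\<lambda>_. 0)"
    obtain e x where ex: "e < E" "x \<in> {0..ell e}" "F e x \<noteq> 0" using nz by blast
    have "v e = 0" "v (e + E) = 0" using v0 by simp_all
    then have "F e 0 = 0" "F e (ell e) = 0" using ex(1) by (simp_all add: v_def bv_def)
    moreover have "0 \<in> {0..ell e}" "ell e \<in> {0..ell e}" using l ex(1) by (simp_all add: less_imp_le)
    ultimately have "A e = 0 \<and> B e = 0"
      using exp_sol_dirichlet_to_neumann(3)[OF k] AB l ex(1) by metis
    then show False using AB ex by (simp add: exp_sol_def)
  qed
  moreover have "secular_op E ell P L \<kappa> v = (\<lambda>_. 0)"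
    using bc dbv_exp_sol[OF k l AB] Pz by (simp add: secular_op_def v_def)
  ultimately show ?thesis by blast
qed

lemma secular_imp_eigenvalue:
  assumes k: "\<kappa> > 0" and l: "\<forall>e<E. ell e > 0"
    and v: "v \<in> kerP (2 * E) P" "v \<noteq> (\<lambda>_. 0)" and sec: "secular_op E ell P L \<kappa> v = (\<lambda>_. 0)"
  shows "laplacian_eigenvalue E ell P L (- (\<kappa>\<^sup>2))"
proof -
  have "\<forall>e<E. \<exists>A B. exp_sol \<kappa> A B 0 = v e \<and> exp_sol \<kappa> A B (ell e) = v (e + E)"
    using exp_sol_dirichlet_to_neumann(4)[OF k] l by blast
  from edgewise_choice[OF this] obtain A B where
    AB: "\<forall>e<E. exp_sol \<kappa> (A e) (B e) 0 = v e \<and> exp_sol \<kappa> (A e) (B e) (ell e) = v (e + E)"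
    by blast
  define F where "F = (\<lambda>e. exp_sol \<kappa> (A e) (B e))"
  define F' where "F' = (\<lambda>e x. complex_of_real \<kappa> * exp_sol \<kappa> (A e) (- B e) x)"
  define F'' where "F'' = (\<lambda>e x. complex_of_real (\<kappa>\<^sup>2) * F e x)"
  have bvF: "bv E ell F = v"
  proof
    fix i
    consider "i < E" | "E \<le> i" "i < 2 * E" | "2 * E \<le> i" by linarith
    then show "bv E ell F i = v i"
    proof cases
      case 2
      then obtain e where "e < E" "i = e + E" by (metis add.commute le_add_diff_inverse mult_2 nat_add_left_cancel_less)
      then show ?thesis using AB by (simp add: bv_def F_def)
    qed (use AB v(1) kerP_out in \<open>auto simp: bv_def F_def\<close>)
  qed
  have ode: "\<forall>e<E. \<forall>x\<in>{0..ell e}.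
         (F e has_vector_derivative F' e x) (at x within {0..ell e}) \<and>
         (F' e has_vector_derivative F'' e x) (at x within {0..ell e}) \<and>
         - F'' e x = complex_of_real (- (\<kappa>\<^sup>2)) * F e x"
    unfolding F_def F'_def F''_def
    by (auto intro!: exp_sol_has_derivative derivative_eq_intros simp: power2_eq_square)
  have nz: "\<exists>e<E. \<exists>x\<in>{0..ell e}. F e x \<noteq> 0"
  proof -
    obtain i where i: "v i \<noteq> 0" using v(2) by auto
    then have "i < 2 * E" using v(1) kerP_out not_less by blast
    have "\<exists>e<E. v e \<noteq> 0 \<or> v (e + E) \<noteq> 0"
    proof (cases "i < E")
      case False
      then show ?thesis using i \<open>i < 2 * E\<close> by (intro exI[of _ "i - E"]) auto
    qed (use i in auto)
    then obtain e where e: "e < E" "v e \<noteq> 0 \<or> v (e + E) \<noteq> 0" by blast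
    have "0 \<in> {0..ell e}" "ell e \<in> {0..ell e}" using l e(1) by (simp_all add: less_imp_le)
    moreover have "F e 0 \<noteq> 0 \<or> F e (ell e) \<noteq> 0" using AB e by (simp add: F_def)
    ultimately show ?thesis using e(1) by blast
  qed
  have Pz: "cmv (2 * E) P (bv E ell F) = (\<lambda>_. 0)" using v(1) bvF by (simp add: kerP_def)
  have "dbv E ell F' = dtn E \<kappa> ell v"
    using dbv_exp_sol[OF k l, of F A B F'] bvF by (simp add: F_def F'_def)
  then have "(\<lambda>i. (dbv E ell F' i - cmv (2 * E) P (dbv E ell F') i)
              + cmv (2 * E) L (\<lambda>i. bv E ell F i - cmv (2 * E) P (bv E ell F) i) i) = (\<lambda>_. 0)"
    using sec Pz bvF by (simp add: secular_op_def)
  then show ?thesis using ode nz Pz unfolding laplacian_eigenvalue_def Let_def by blast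
qed

lemma alpha_beta_closed_forms:
  assumes "\<kappa> > 0" "ell > 0"
  defines "T \<equiv> exp (\<kappa> * ell)"
  shows "alpha \<kappa> ell - beta \<kappa> ell = \<kappa> * (T - 1) / (T + 1)"
    and "alpha \<kappa> ell + beta \<kappa> ell = \<kappa> * (T + 1) / (T - 1)"
    and "beta \<kappa> ell \<ge> 0"
proof -
  have T: "T > 1" using assms by (simp add: T_def)
  then have "T + 1 \<noteq> 0" "T - 1 \<noteq> 0" by simp_all
  have "alpha \<kappa> ell - beta \<kappa> ell = \<kappa> * (T - 1) * (T - 1) / ((T - 1) * (T + 1))"
    unfolding alpha_def beta_def T_def[symmetric]
    by (simp add: power2_eq_square algebra_simps flip: diff_divide_distrib)
  then show "alpha \<kappa> ell - beta \<kappa> ell = \<kappa> * (T - 1) / (T + 1)"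
    using \<open>T - 1 \<noteq> 0\<close> by simp
  have "alpha \<kappa> ell + beta \<kappa> ell = \<kappa> * (T + 1) * (T + 1) / ((T - 1) * (T + 1))"
    unfolding alpha_def beta_def T_def[symmetric]
    by (simp add: power2_eq_square algebra_simps flip: add_divide_distrib)
  then show "alpha \<kappa> ell + beta \<kappa> ell = \<kappa> * (T + 1) / (T - 1)"
    using \<open>T + 1 \<noteq> 0\<close> by simp
  have "T * T > 1" using T by (metis less_1_mult)
  then show "beta \<kappa> ell \<ge> 0" using T assms(1) by (simp add: beta_def T_def[symmetric] power2_eq_square)
qed

lemma continuous_on_alpha_beta:
  assumes "ell > 0"
  shows "continuous_on {0<..} (\<lambda>k. alpha k ell)" and "continuous_on {0<..} (\<lambda>k. beta k ell)"
proof -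
  have nz: "(exp (k * ell))\<^sup>2 - 1 \<noteq> 0" if "k \<in> {0<..}" for k
  proof -
    have "exp (k * ell) > 1" using assms that by simp
    then have "exp (k * ell) * exp (k * ell) > 1" by (metis less_1_mult)
    then show ?thesis by (simp add: power2_eq_square)
  qed
  show "continuous_on {0<..} (\<lambda>k. alpha k ell)"
    unfolding alpha_def by (intro continuous_intros) (use nz in auto)
  show "continuous_on {0<..} (\<lambda>k. beta k ell)"
    unfolding beta_def by (intro continuous_intros) (use nz in auto)
qed

lemma sum_over_edges: "(\<Sum>i<2 * (E::nat). g i) = (\<Sum>e<E. g e + g (e + E))"
proof -
  have split: "{..<2 * E} = {..<E} \<union> {E..<E + E}" by auto
  have "(\<Sum>i<2 * E. g i) = (\<Sum>i<E. g i) + (\<Sum>i\<in>{0 + E..<E + E}. g i)"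
    unfolding split by (subst sum.union_disjoint) auto
  also have "(\<Sum>i\<in>{0 + E..<E + E}. g i) = (\<Sum>i<E. g (i + E))"
    by (simp only: sum.shift_bounds_nat_ivl lessThan_atLeast0)
  finally show ?thesis by (simp add: sum.distrib)
qed

definition edge_mass :: "nat \<Rightarrow> (nat \<Rightarrow> complex) \<Rightarrow> nat \<Rightarrow> real" where
  "edge_mass E v e = (cmod (v e))\<^sup>2 + (cmod (v (e + E)))\<^sup>2"

lemma norm2_edge_mass: "norm2 (2 * E) v = (\<Sum>e<E. edge_mass E v e)"
  unfolding norm2_def edge_mass_def by (rule sum_over_edges)

lemma edge_mass_nonneg: "edge_mass E v e \<ge> 0"
  by (simp add: edge_mass_def)

lemma cinner_dtn: "cinner (2 * E) u (dtn E \<kappa> ell v) =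
   (\<Sum>e<E. cnj (u e) * (- complex_of_real (alpha \<kappa> (ell e)) * v e + complex_of_real (beta \<kappa> (ell e)) * v (e + E))
        + cnj (u (e + E)) * (complex_of_real (beta \<kappa> (ell e)) * v e - complex_of_real (alpha \<kappa> (ell e)) * v (e + E)))"
  unfolding cinner_def sum_over_edges by (intro sum.cong refl) (simp add: dtn_def)

lemma dtn_symmetric: "cinner (2 * E) u (dtn E \<kappa> ell v) = cinner (2 * E) (dtn E \<kappa> ell u) v"
proof -
  have "cnj (cinner (2 * E) v (dtn E \<kappa> ell u)) = cinner (2 * E) u (dtn E \<kappa> ell v)"
    unfolding cinner_dtn cnj_sum by (intro sum.cong refl) (simp add: algebra_simps)
  then show ?thesis by (simp add: cinner_commute_cnj)
qed

lemma dtn_linear: "dtn E \<kappa> ell (\<lambda>i. v i + c * w i) = (\<lambda>i. dtn E \<kappa> ell v i + c * dtn E \<kappa> ell w i)"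
  by (auto simp: dtn_def algebra_simps fun_eq_iff)

lemma dtn_scale: "dtn E \<kappa> ell (\<lambda>i. c * v i) = (\<lambda>i. c * dtn E \<kappa> ell v i)"
  by (auto simp: dtn_def algebra_simps fun_eq_iff)

lemma Re_cinner_dtn: "Re (cinner (2 * E) v (dtn E \<kappa> ell v)) =
   (\<Sum>e<E. - alpha \<kappa> (ell e) * edge_mass E v e + beta \<kappa> (ell e) * (2 * Re (cnj (v e) * v (e + E))))"
  unfolding cinner_dtn Re_sum edge_mass_def cmod_power2
  by (intro sum.cong refl) (simp add: algebra_simps power2_eq_square)

lemma Re_cnj_mult_bound: "\<bar>2 * Re (cnj a * b)\<bar> \<le> (cmod a)\<^sup>2 + (cmod b)\<^sup>2"
proof -
  have "0 \<le> (Re a - Re b)\<^sup>2 + (Im a - Im b)\<^sup>2" "0 \<le> (Re a + Re b)\<^sup>2 + (Im a + Im b)\<^sup>2" by simp_all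
  then show ?thesis unfolding cmod_power2 abs_le_iff by (simp add: power2_diff power2_sum algebra_simps)
qed

lemma dtn_form_bounds:
  assumes k: "\<kappa> > 0" and l: "\<forall>e<E. ell e > 0"
  shows "Re (cinner (2 * E) v (dtn E \<kappa> ell v)) \<le> - (\<Sum>e<E. (alpha \<kappa> (ell e) - beta \<kappa> (ell e)) * edge_mass E v e)"
    and "Re (cinner (2 * E) v (dtn E \<kappa> ell v)) \<ge> - (\<Sum>e<E. (alpha \<kappa> (ell e) + beta \<kappa> (ell e)) * edge_mass E v e)"
proof -
  have "beta \<kappa> (ell e) * \<bar>2 * Re (cnj (v e) * v (e + E))\<bar> \<le> beta \<kappa> (ell e) * edge_mass E v e"
    if "e < E" for e
    using alpha_beta_closed_forms(3)[OF k] l that Re_cnj_mult_bound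
    by (auto simp: edge_mass_def intro: mult_left_mono)
  then have edge: "\<bar>beta \<kappa> (ell e) * (2 * Re (cnj (v e) * v (e + E)))\<bar> \<le> beta \<kappa> (ell e) * edge_mass E v e"
    if "e < E" for e
    using that alpha_beta_closed_forms(3)[OF k] l by (simp add: abs_mult)
  show "Re (cinner (2 * E) v (dtn E \<kappa> ell v)) \<le> - (\<Sum>e<E. (alpha \<kappa> (ell e) - beta \<kappa> (ell e)) * edge_mass E v e)"
    unfolding Re_cinner_dtn sum_negf[symmetric]
    using edge by (intro sum_mono) (fastforce simp: algebra_simps abs_le_iff)
  show "Re (cinner (2 * E) v (dtn E \<kappa> ell v)) \<ge> - (\<Sum>e<E. (alpha \<kappa> (ell e) + beta \<kappa> (ell e)) * edge_mass E v e)"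
    unfolding Re_cinner_dtn sum_negf[symmetric]
    using edge by (intro sum_mono) (fastforce simp: algebra_simps abs_le_iff)
qed

(* The Hermitian form of the secular operator, as a function of (k, v):
   <v, L v> + <v, N(k) v>.  On ker P it is the form of (1 - P) N(k) + L. *)
definition secular_form ::
  "nat \<Rightarrow> (nat \<Rightarrow> real) \<Rightarrow> (nat \<Rightarrow> nat \<Rightarrow> complex) \<Rightarrow> real \<times> (nat \<Rightarrow> complex) \<Rightarrow> real" where
  "secular_form E ell L p =
     qform (2 * E) L (snd p) + Re (cinner (2 * E) (snd p) (dtn E (fst p) ell (snd p)))"

lemma continuous_on_snd_coordinate [continuous_intros]:
  "continuous_on S (\<lambda>p::real \<times> (nat \<Rightarrow> complex). snd p i)"
  by (rule continuous_on_compose2[OF continuous_on_coordinate continuous_on_snd]) auto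

lemma continuous_on_secular_form:
  assumes l: "\<forall>e<E. ell e > 0"
  shows "continuous_on ({0<..} \<times> S) (secular_form E ell L)"
proof -
  have ca: "continuous_on ({0<..} \<times> S) (\<lambda>p. alpha (fst p) (ell e))" if "e < E" for e
    using l that by (intro continuous_on_compose2[OF continuous_on_alpha_beta(1) continuous_on_fst]) auto
  have cb: "continuous_on ({0<..} \<times> S) (\<lambda>p. beta (fst p) (ell e))" if "e < E" for e
    using l that by (intro continuous_on_compose2[OF continuous_on_alpha_beta(2) continuous_on_fst]) auto
  have cq: "continuous_on ({0<..} \<times> S) (\<lambda>p. qform (2 * E) L (snd p))"
    by (rule continuous_on_compose2[OF continuous_on_qform continuous_on_snd]) auto
  have "continuous_on ({0<..} \<times> S) (\<lambda>p. qform (2 * E) L (snd p) + (\<Sum>e<E. - alpha (fst p) (ell e) *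
          ((cmod (snd p e))\<^sup>2 + (cmod (snd p (e + E)))\<^sup>2) + beta (fst p) (ell e) * (2 * Re (cnj (snd p e) * snd p (e + E)))))"
    by (intro continuous_intros cq ca cb) auto
  then show ?thesis
    unfolding secular_form_def[abs_def] Re_cinner_dtn edge_mass_def by simp
qed

lemma secular_form_scale: "secular_form E ell L (\<kappa>, \<lambda>i. c * v i) = (cmod c)\<^sup>2 * secular_form E ell L (\<kappa>, v)"
proof -
  have "cinner (2 * E) (\<lambda>i. c * v i) (dtn E \<kappa> ell (\<lambda>i. c * v i)) = (cnj c * c) * cinner (2 * E) v (dtn E \<kappa> ell v)"
    by (simp add: dtn_scale cinner_scale_left cinner_scale_right)
  also have "cnj c * c = complex_of_real ((cmod c)\<^sup>2)" by (rule cnj_mult_self)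
  finally show ?thesis by (simp add: secular_form_def qform_scale algebra_simps)
qed

lemma secular_op_on_kerP:
  assumes P: "orth_proj (2 * E) P" and L: "selfadj_on_ker (2 * E) P L"
    and v: "v \<in> kerP (2 * E) P" and w: "w \<in> kerP (2 * E) P"
  shows "secular_op E ell P L \<kappa> v \<in> kerP (2 * E) P"
    and "secular_op E ell P L \<kappa> (\<lambda>i. v i + c * w i) = (\<lambda>i. secular_op E ell P L \<kappa> v i + c * secular_op E ell P L \<kappa> w i)"
    and "cinner (2 * E) v (secular_op E ell P L \<kappa> w) = cinner (2 * E) (secular_op E ell P L \<kappa> v) w"
    and "Re (cinner (2 * E) v (secular_op E ell P L \<kappa> v)) = secular_form E ell L (\<kappa>, v)"
proof -
  have LV: "cmv (2 * E) L v \<in> kerP (2 * E) P" using L v unfolding selfadj_on_ker_def by blast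
  have Lsym: "cinner (2 * E) (cmv (2 * E) L v) w = cinner (2 * E) v (cmv (2 * E) L w)"
    using L v w unfolding selfadj_on_ker_def by blast
  show "secular_op E ell P L \<kappa> v \<in> kerP (2 * E) P"
    unfolding secular_op_def by (intro kerP_add LV compl_in_kerP[OF P]) (simp add: dtn_def)
  show "secular_op E ell P L \<kappa> (\<lambda>i. v i + c * w i) = (\<lambda>i. secular_op E ell P L \<kappa> v i + c * secular_op E ell P L \<kappa> w i)"
    by (simp add: secular_op_def dtn_linear cmv_add cmv_scale algebra_simps)
  have "cinner (2 * E) (secular_op E ell P L \<kappa> v) w
      = cnj (cinner (2 * E) w (\<lambda>i. dtn E \<kappa> ell v i - cmv (2 * E) P (dtn E \<kappa> ell v) i)) + cinner (2 * E) (cmv (2 * E) L v) w"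
    by (simp add: secular_op_def cinner_add_left cinner_commute_cnj)
  also have "\<dots> = cinner (2 * E) v (dtn E \<kappa> ell w) + cinner (2 * E) v (cmv (2 * E) L w)"
    by (simp add: kerP_cinner_compl[OF P w] cinner_commute_cnj dtn_symmetric Lsym)
  also have "\<dots> = cinner (2 * E) v (secular_op E ell P L \<kappa> w)"
    by (simp add: secular_op_def cinner_add_right kerP_cinner_compl[OF P v])
  finally show "cinner (2 * E) v (secular_op E ell P L \<kappa> w) = cinner (2 * E) (secular_op E ell P L \<kappa> v) w" ..
  have "cinner (2 * E) v (secular_op E ell P L \<kappa> v) = cinner (2 * E) v (dtn E \<kappa> ell v) + cinner (2 * E) v (cmv (2 * E) L v)"
    unfolding secular_op_def cinner_add_right kerP_cinner_compl[OF P v] ..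
  then show "Re (cinner (2 * E) v (secular_op E ell P L \<kappa> v)) = secular_form E ell L (\<kappa>, v)"
    by (simp add: secular_form_def qform_def)
qed

lemma last_parameter_with_zero_max:
  fixes f :: "real \<times> 'a::t2_space \<Rightarrow> real"
  assumes S: "compact S" and f: "continuous_on ({k1..k2} \<times> S) f" and "k1 \<le> k2"
    and s0: "s0 \<in> S" "f (k1, s0) \<ge> 0" and neg: "\<And>s. s \<in> S \<Longrightarrow> f (k2, s) < 0"
  shows "\<exists>k\<in>{k1..k2}. \<exists>s\<in>S. f (k, s) = 0 \<and> (\<forall>s'\<in>S. f (k, s') \<le> 0)"
proof -
  define T where "T = ({k1..k2} \<times> S) \<inter> f -` {0..}"
  have C: "compact ({k1..k2} \<times> S)" by (intro compact_Times compact_Icc S)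
  have "closed T"
    unfolding T_def by (rule continuous_closed_preimage[OF f compact_imp_closed[OF C]]) simp
  then have "compact (({k1..k2} \<times> S) \<inter> T)" by (rule compact_Int_closed[OF C])
  then have "compact T" by (simp add: T_def Int_absorb)
  moreover have "(k1, s0) \<in> T" using s0 \<open>k1 \<le> k2\<close> by (simp add: T_def)
  ultimately obtain p where p: "p \<in> T" and pmax: "\<And>q. q \<in> T \<Longrightarrow> fst q \<le> fst p"
    using continuous_attains_sup[of T fst] continuous_on_fst[OF continuous_on_id] by blast
  obtain k s where ks: "p = (k, s)" by fastforce
  have k: "k \<in> {k1..k2}" and s: "s \<in> S" "f (k, s) \<ge> 0" using p by (auto simp: T_def ks)
  have nonpos: "f (k, u) \<le> 0" if u: "u \<in> S" for u
  proof (rule ccontr)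
    assume "\<not> f (k, u) \<le> 0"
    moreover have "continuous_on {k..k2} (\<lambda>k'. f (k', u))"
      using k u by (intro continuous_on_compose2[OF f] continuous_on_Pair continuous_on_id continuous_on_const) auto
    ultimately obtain k' where k': "k \<le> k'" "k' \<le> k2" "f (k', u) = 0"
      using IVT2'[of "\<lambda>k'. f (k', u)" k2 0 k] neg[OF u] k by auto
    then have "(k', u) \<in> T" using k u by (simp add: T_def)
    then have "k' = k" using pmax[of "(k', u)"] k' ks by simp
    then show False using k'(3) \<open>\<not> f (k, u) \<le> 0\<close> by simp
  qed
  then show ?thesis using k s by (intro bexI[OF _ k] bexI[OF _ s(1)]) (simp add: order.antisym)
qed

lemma eigenvalue_at_zero_max_form:
  assumes k: "\<kappa> > 0" and l: "\<forall>e<E. ell e > 0"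
    and P: "orth_proj (2 * E) P" and L: "selfadj_on_ker (2 * E) P L"
    and vs: "vs \<in> unit_ker (2 * E) P" "secular_form E ell L (\<kappa>, vs) = 0"
    and nonpos: "\<And>u. u \<in> unit_ker (2 * E) P \<Longrightarrow> secular_form E ell L (\<kappa>, u) \<le> 0"
  shows "laplacian_eigenvalue E ell P L (- (\<kappa>\<^sup>2))"
proof -
  let ?K = "secular_op E ell P L \<kappa>"
  have vsk: "vs \<in> kerP (2 * E) P" "vs \<noteq> (\<lambda>_. 0)" using vs(1) by (auto simp: unit_ker_def norm2_def)
  have form_nonpos: "secular_form E ell L (\<kappa>, w) \<le> 0 * norm2 (2 * E) w" if "w \<in> kerP (2 * E) P" for w
  proof (rule homogeneous_bound[OF that _ _ nonpos])
    show "secular_form E ell L (\<kappa>, \<lambda>i. c * u i) = (cmod c)\<^sup>2 * secular_form E ell L (\<kappa>, u)" for c u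
      by (rule secular_form_scale)
    show "norm2 (2 * E) w = 0 \<Longrightarrow> secular_form E ell L (\<kappa>, w) = 0"
      by (simp add: secular_form_def qform_def norm2_eq_0_cinner)
  qed
  have "\<forall>i<2 * E. ?K vs i = 0"
  proof (rule nonpos_form_null_vector[where V="kerP (2 * E) P" and K="?K"])
    show "Re (cinner (2 * E) w (?K w)) \<le> 0" if "w \<in> kerP (2 * E) P" for w
      using form_nonpos[OF that] secular_op_on_kerP(4)[OF P L that that] by simp
    show "Re (cinner (2 * E) vs (?K vs)) = 0"
      using vs(2) secular_op_on_kerP(4)[OF P L vsk(1) vsk(1)] by simp
    show "?K w \<in> kerP (2 * E) P" if "w \<in> kerP (2 * E) P" for w
      using secular_op_on_kerP(1)[OF P L that that] .
    show "?K (\<lambda>i. v i + c * w i) = (\<lambda>i. ?K v i + c * ?K w i)"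
      if "v \<in> kerP (2 * E) P" "w \<in> kerP (2 * E) P" for v w c
      using secular_op_on_kerP(2)[OF P L that] .
    show "cinner (2 * E) v (?K w) = cinner (2 * E) (?K v) w"
      if "v \<in> kerP (2 * E) P" "w \<in> kerP (2 * E) P" for v w
      using secular_op_on_kerP(3)[OF P L that] .
  qed (auto intro: kerP_add kerP_scale vsk(1))
  moreover have "?K vs \<in> kerP (2 * E) P" using secular_op_on_kerP(1)[OF P L vsk(1) vsk(1)] .
  ultimately have "?K vs = (\<lambda>_. 0)" by (metis kerP_out not_less)
  then show ?thesis using secular_imp_eigenvalue[OF k l vsk] by blast
qed

lemma no_eigenvalue_if_form_negative:
  assumes k: "\<kappa> > 0" and l: "\<forall>e<E. ell e > 0"
    and P: "orth_proj (2 * E) P" and L: "selfadj_on_ker (2 * E) P L"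
    and neg: "\<And>v. v \<in> kerP (2 * E) P \<Longrightarrow> v \<noteq> (\<lambda>_. 0) \<Longrightarrow> secular_form E ell L (\<kappa>, v) < 0"
  shows "\<not> laplacian_eigenvalue E ell P L (- (\<kappa>\<^sup>2))"
proof
  assume "laplacian_eigenvalue E ell P L (- (\<kappa>\<^sup>2))"
  then obtain v where v: "v \<in> kerP (2 * E) P" "v \<noteq> (\<lambda>_. 0)" "secular_op E ell P L \<kappa> v = (\<lambda>_. 0)"
    using eigenvalue_imp_secular[OF k l] by blast
  have "Re (cinner (2 * E) v (secular_op E ell P L \<kappa> v)) = secular_form E ell L (\<kappa>, v)"
    by (rule secular_op_on_kerP(4)[OF P L v(1) v(1)])
  then have "secular_form E ell L (\<kappa>, v) = 0" using v(3) by simp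
  then show False using neg[OF v(1,2)] by simp
qed

lemma weighted_sum_gt:
  fixes a w :: "nat \<Rightarrow> real"
  assumes "\<forall>e<E. a e > M" "\<forall>e<E. w e \<ge> 0" "(\<Sum>e<E. w e) > 0"
  shows "(\<Sum>e<E. a e * w e) > M * (\<Sum>e<E. w e)"
proof -
  obtain e0 where "e0 < E" "w e0 > 0"
    using assms(3) sum_nonpos[of "{..<E}" w] by (metis lessThan_iff not_le)
  then have "0 < (\<Sum>e<E. (a e - M) * w e)"
    using assms by (intro sum_pos2[of "{..<E}" e0]) auto
  then show ?thesis by (simp add: algebra_simps sum_subtractf sum_distrib_left)
qed

lemma secular_form_negative:
  assumes k: "\<kappa> > 0" and l: "\<forall>e<E. ell e > 0"
    and bound: "\<forall>w\<in>kerP (2 * E) P. qform (2 * E) L w \<le> M * norm2 (2 * E) w"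
    and big: "\<forall>e<E. alpha \<kappa> (ell e) - beta \<kappa> (ell e) > M"
    and v: "v \<in> kerP (2 * E) P" "v \<noteq> (\<lambda>_. 0)"
  shows "secular_form E ell L (\<kappa>, v) < 0"
proof -
  have "(\<Sum>e<E. (alpha \<kappa> (ell e) - beta \<kappa> (ell e)) * edge_mass E v e) > M * norm2 (2 * E) v"
    unfolding norm2_edge_mass
    using big norm2_pos_kerP[OF v] by (intro weighted_sum_gt) (auto simp: edge_mass_nonneg norm2_edge_mass)
  moreover have "qform (2 * E) L v \<le> M * norm2 (2 * E) v" using bound v(1) by blast
  ultimately show ?thesis
    using dtn_form_bounds(1)[OF k l, of v] by (simp add: secular_form_def)
qed

lemma secular_form_positive:
  assumes k: "\<kappa> > 0" and l: "\<forall>e<E. ell e > 0"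
    and vm: "cmv (2 * E) L vm = (\<lambda>i. complex_of_real M * vm i)" "norm2 (2 * E) vm > 0"
    and small: "\<forall>e<E. alpha \<kappa> (ell e) + beta \<kappa> (ell e) < M"
  shows "secular_form E ell L (\<kappa>, vm) > 0"
proof -
  have "(\<Sum>e<E. (- (alpha \<kappa> (ell e) + beta \<kappa> (ell e))) * edge_mass E vm e) > (- M) * norm2 (2 * E) vm"
    unfolding norm2_edge_mass
    using small vm(2) by (intro weighted_sum_gt) (auto simp: edge_mass_nonneg norm2_edge_mass)
  then have "(\<Sum>e<E. (alpha \<kappa> (ell e) + beta \<kappa> (ell e)) * edge_mass E vm e) < M * norm2 (2 * E) vm"
    by (simp only: mult_minus_left sum_negf neg_less_iff_less)
  then show ?thesis
    using dtn_form_bounds(2)[OF k l, of vm] qform_eigenvector[OF vm(1)]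
    by (simp add: secular_form_def)
qed

lemma lowest_eigenvalue_bracket:
  assumes l: "\<forall>e<E. ell e > 0" and P: "orth_proj (2 * E) P" and L: "selfadj_on_ker (2 * E) P L"
    and vm: "vm \<in> unit_ker (2 * E) P" "cmv (2 * E) L vm = (\<lambda>i. complex_of_real M * vm i)"
    and bound: "\<forall>w\<in>kerP (2 * E) P. qform (2 * E) L w \<le> M * norm2 (2 * E) w"
    and eps: "0 < \<epsilon>" "\<epsilon> < M"
    and small: "\<forall>e<E. alpha (M - \<epsilon>) (ell e) + beta (M - \<epsilon>) (ell e) < M"
    and big: "\<forall>\<kappa>\<ge>M + \<epsilon>. \<forall>e<E. alpha \<kappa> (ell e) - beta \<kappa> (ell e) > M"
  shows "- ((M + \<epsilon>)\<^sup>2) \<le> lowest_eigenvalue E ell P L \<and> lowest_eigenvalue E ell P L \<le> - ((M - \<epsilon>)\<^sup>2)"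
proof -
  define S where "S = {lam. laplacian_eigenvalue E ell P L lam}"
  have no_eig: "\<not> laplacian_eigenvalue E ell P L (- (\<kappa>\<^sup>2))" if "\<kappa> \<ge> M + \<epsilon>" for \<kappa>
    using that eps big by (intro no_eigenvalue_if_form_negative[OF _ l P L] secular_form_negative[OF _ l bound]) auto
  have lower: "- ((M + \<epsilon>)\<^sup>2) \<le> lam" if "lam \<in> S" for lam
  proof (rule ccontr)
    assume "\<not> - ((M + \<epsilon>)\<^sup>2) \<le> lam"
    then have lt: "(M + \<epsilon>)\<^sup>2 < - lam" by simp
    then have "0 \<le> - lam" using zero_le_power2[of "M + \<epsilon>"] by linarith
    then have "M + \<epsilon> \<le> sqrt (- lam)" "lam = - ((sqrt (- lam))\<^sup>2)"
      using real_less_rsqrt[OF lt] by simp_all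
    then show False using no_eig[of "sqrt (- lam)"] that by (simp add: S_def)
  qed
  have vmk: "vm \<in> kerP (2 * E) P" "norm2 (2 * E) vm = 1" using vm(1) by (simp_all add: unit_ker_def)
  have "\<exists>\<kappa>\<in>{M - \<epsilon>..M + \<epsilon>}. \<exists>vs\<in>unit_ker (2 * E) P. secular_form E ell L (\<kappa>, vs) = 0
          \<and> (\<forall>u\<in>unit_ker (2 * E) P. secular_form E ell L (\<kappa>, u) \<le> 0)"
  proof (rule last_parameter_with_zero_max[OF compact_unit_ker _ _ vm(1)])
    show "continuous_on ({M - \<epsilon>..M + \<epsilon>} \<times> unit_ker (2 * E) P) (secular_form E ell L)"
      using eps by (intro continuous_on_subset[OF continuous_on_secular_form[OF l]]) auto
    show "secular_form E ell L (M - \<epsilon>, vm) \<ge> 0"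
      using secular_form_positive[OF _ l vm(2)] eps small vmk(2) by (simp add: less_imp_le)
    show "secular_form E ell L (M + \<epsilon>, s) < 0" if "s \<in> unit_ker (2 * E) P" for s
      using that eps big by (intro secular_form_negative[OF _ l bound]) (auto simp: unit_ker_def norm2_def)
  qed (use eps in simp)
  then obtain \<kappa> where k: "M - \<epsilon> \<le> \<kappa>" and eig: "laplacian_eigenvalue E ell P L (- (\<kappa>\<^sup>2))"
    using eigenvalue_at_zero_max_form[OF _ l P L] eps by fastforce
  have "Inf S \<le> - (\<kappa>\<^sup>2)" using eig lower by (intro cInf_lower) (auto simp: S_def bdd_below_def)
  also have "\<dots> \<le> - ((M - \<epsilon>)\<^sup>2)" using k eps by (simp add: power_mono)
  finally show ?thesis using eig lower unfolding lowest_eigenvalue_def S_def[symmetric]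
    by (auto intro!: cInf_greatest simp: S_def)
qed

lemma tendsto_of_shrinking_brackets:
  fixes f :: "'a \<Rightarrow> real" and M :: real
  assumes M: "M > 0"
    and bracket: "\<And>\<epsilon>. 0 < \<epsilon> \<Longrightarrow> \<epsilon> < M \<Longrightarrow>
                    \<forall>\<^sub>F x in F. - ((M + \<epsilon>)\<^sup>2) \<le> f x \<and> f x \<le> - ((M - \<epsilon>)\<^sup>2)"
  shows "(f \<longlongrightarrow> - (M\<^sup>2)) F"
proof (rule order_tendstoI)
  have small: "\<forall>\<^sub>F \<epsilon> in at_right 0. 0 < \<epsilon> \<and> \<epsilon> < M"
    using M by (auto simp: eventually_at_right intro!: exI[of _ M])
  fix a assume a: "a < - (M\<^sup>2)"
  have "((\<lambda>\<epsilon>. - ((M + \<epsilon>)\<^sup>2)) \<longlongrightarrow> - (M\<^sup>2)) (at_right 0)"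
    by (auto intro!: tendsto_eq_intros)
  from eventually_conj[OF small order_tendstoD(1)[OF this a]]
  obtain \<epsilon> where e: "0 < \<epsilon>" "\<epsilon> < M" "a < - ((M + \<epsilon>)\<^sup>2)"
    using eventually_happens trivial_limit_at_right_real by blast
  show "\<forall>\<^sub>F x in F. a < f x"
    by (rule eventually_mono[OF bracket[OF e(1,2)]]) (use e(3) in linarith)
next
  have small: "\<forall>\<^sub>F \<epsilon> in at_right 0. 0 < \<epsilon> \<and> \<epsilon> < M"
    using M by (auto simp: eventually_at_right intro!: exI[of _ M])
  fix b assume b: "- (M\<^sup>2) < b"
  have "((\<lambda>\<epsilon>. - ((M - \<epsilon>)\<^sup>2)) \<longlongrightarrow> - (M\<^sup>2)) (at_right 0)"
    by (auto intro!: tendsto_eq_intros)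
  from eventually_conj[OF small order_tendstoD(2)[OF this b]]
  obtain \<epsilon> where e: "0 < \<epsilon>" "\<epsilon> < M" "- ((M - \<epsilon>)\<^sup>2) < b"
    using eventually_happens trivial_limit_at_right_real by blast
  show "\<forall>\<^sub>F x in F. f x < b"
    by (rule eventually_mono[OF bracket[OF e(1,2)]]) (use e(3) in linarith)
qed

(* For long edges the hypotheses of lowest_eigenvalue_bracket hold: alpha +- beta -> k as l -> oo. *)
lemma long_edge_conditions:
  assumes eps: "0 < \<epsilon>" "\<epsilon> < M" and l: "ell > 0"
    and long: "exp ((M - \<epsilon>) * ell) > (2 * M + \<epsilon>) / \<epsilon>"
  shows "alpha (M - \<epsilon>) ell + beta (M - \<epsilon>) ell < M"
    and "\<forall>\<kappa>\<ge>M + \<epsilon>. alpha \<kappa> ell - beta \<kappa> ell > M"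
proof -
  define T where "T = exp ((M - \<epsilon>) * ell)"
  have T1: "T > 1" unfolding T_def using eps l by simp
  have eT: "\<epsilon> * T > 2 * M + \<epsilon>" using long eps unfolding T_def by (simp add: divide_less_eq mult.commute)
  then have "(M - \<epsilon>) * (T + 1) < M * (T - 1)" using eps by (simp add: algebra_simps)
  then have "(M - \<epsilon>) * (T + 1) / (T - 1) < M" using T1 by (simp add: divide_less_eq)
  then show "alpha (M - \<epsilon>) ell + beta (M - \<epsilon>) ell < M"
    using alpha_beta_closed_forms(2)[of "M - \<epsilon>" ell] eps l unfolding T_def by simp
  show "\<forall>\<kappa>\<ge>M + \<epsilon>. alpha \<kappa> ell - beta \<kappa> ell > M"
  proof (intro allI impI)
    fix \<kappa> assume k: "\<kappa> \<ge> M + \<epsilon>"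
    define T' where "T' = exp (\<kappa> * ell)"
    have "T \<le> T'" unfolding T_def T'_def using k eps l by (simp add: mult_right_mono)
    then have "\<epsilon> * T \<le> \<epsilon> * T'" using eps by simp
    then have eT': "\<epsilon> * T' > 2 * M + \<epsilon>" using eT by linarith
    have T'1: "T' > 1" using \<open>T \<le> T'\<close> T1 by simp
    have "(M + \<epsilon>) * (T' - 1) \<le> \<kappa> * (T' - 1)" using k T'1 by (intro mult_right_mono) auto
    moreover have "(M + \<epsilon>) * (T' - 1) > M * (T' + 1)" using eT' by (simp add: algebra_simps)
    ultimately have "M * (T' + 1) < \<kappa> * (T' - 1)" by linarith
    then have "M < \<kappa> * (T' - 1) / (T' + 1)" using T'1 by (simp add: less_divide_eq)
    then show "alpha \<kappa> ell - beta \<kappa> ell > M"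
      using alpha_beta_closed_forms(1)[of \<kappa> ell] k eps l unfolding T'_def by simp
  qed
qed

lemma eventually_lowest_eigenvalue_bracket:
  assumes l: "\<forall>e<E. l e > 0" and P: "orth_proj (2 * E) P" and L: "selfadj_on_ker (2 * E) P L"
    and vm: "vm \<in> unit_ker (2 * E) P" "cmv (2 * E) L vm = (\<lambda>i. complex_of_real M * vm i)"
    and bound: "\<forall>w\<in>kerP (2 * E) P. qform (2 * E) L w \<le> M * norm2 (2 * E) w"
    and eps: "0 < \<epsilon>" "\<epsilon> < M"
  shows "\<forall>\<^sub>F \<eta> in at_top. - ((M + \<epsilon>)\<^sup>2) \<le> lowest_eigenvalue E (\<lambda>e. \<eta> * l e) P L
                          \<and> lowest_eigenvalue E (\<lambda>e. \<eta> * l e) P L \<le> - ((M - \<epsilon>)\<^sup>2)"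
proof -
  have "\<forall>\<^sub>F \<eta> in at_top. exp ((M - \<epsilon>) * (\<eta> * l e)) > (2 * M + \<epsilon>) / \<epsilon>" if "e < E" for e
  proof -
    have "filterlim (\<lambda>\<eta>. (M - \<epsilon>) * l e * \<eta>) at_top at_top"
      using l that eps by (intro filterlim_tendsto_pos_mult_at_top[OF tendsto_const] filterlim_ident) auto
    then have "filterlim (\<lambda>\<eta>. exp ((M - \<epsilon>) * l e * \<eta>)) at_top at_top"
      by (rule filterlim_compose[OF exp_at_top])
    then have "filterlim (\<lambda>\<eta>. exp ((M - \<epsilon>) * (\<eta> * l e))) at_top at_top"
      by (simp add: mult_ac)
    then show ?thesis by (simp add: filterlim_at_top_dense)
  qed
  then have "\<forall>\<^sub>F \<eta> in at_top. \<eta> > 0 \<and> (\<forall>e\<in>{..<E}. exp ((M - \<epsilon>) * (\<eta> * l e)) > (2 * M + \<epsilon>) / \<epsilon>)"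
    by (intro eventually_conj eventually_ball_finite eventually_gt_at_top) auto
  then show ?thesis
  proof (rule eventually_mono)
    fix \<eta> assume \<eta>: "\<eta> > 0 \<and> (\<forall>e\<in>{..<E}. exp ((M - \<epsilon>) * (\<eta> * l e)) > (2 * M + \<epsilon>) / \<epsilon>)"
    then have l\<eta>: "\<forall>e<E. \<eta> * l e > 0" using l by simp
    show "- ((M + \<epsilon>)\<^sup>2) \<le> lowest_eigenvalue E (\<lambda>e. \<eta> * l e) P L
            \<and> lowest_eigenvalue E (\<lambda>e. \<eta> * l e) P L \<le> - ((M - \<epsilon>)\<^sup>2)"
      using \<eta> l\<eta> long_edge_conditions[OF eps]
      by (intro lowest_eigenvalue_bracket[OF l\<eta> P L vm bound eps]) auto
  qed
qed

theorem proposition3p3: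
  fixes E :: nat and l :: "nat \<Rightarrow> real" and P L :: "nat \<Rightarrow> nat \<Rightarrow> complex"
  assumes "E \<ge> 1"
    and "\<forall>e<E. l e > 0"
    and "orth_proj (2 * E) P"
    and "selfadj_on_ker (2 * E) P L"
    and "\<exists>\<mu>\<in>ker_eigenvalues (2 * E) P L. \<mu> > 0"
  shows "(\<forall>\<^sub>F \<eta> in at_top. lowest_eigenvalue E (\<lambda>e. \<eta> * l e) P L < 0) \<and>
         ((\<lambda>\<eta>. lowest_eigenvalue E (\<lambda>e. \<eta> * l e) P L)
            \<longlongrightarrow> - (Max (ker_eigenvalues (2 * E) P L))\<^sup>2) at_top"
proof -
  note l = assms(2) and P = assms(3) and L = assms(4)
  define M where "M = Max (ker_eigenvalues (2 * E) P L)"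
  define low where "low = (\<lambda>\<eta>. lowest_eigenvalue E (\<lambda>e. \<eta> * l e) P L)"
  obtain \<mu> where \<mu>: "\<mu> \<in> ker_eigenvalues (2 * E) P L" "\<mu> > 0" using assms(5) by blast
  then have M: "M > 0" using Max_ge[OF finite_eigenvalues[OF L] \<mu>(1)] by (simp add: M_def)
  obtain vm where vm: "vm \<in> unit_ker (2 * E) P" "cmv (2 * E) L vm = (\<lambda>i. complex_of_real M * vm i)"
    and bound: "\<forall>w\<in>kerP (2 * E) P. qform (2 * E) L w \<le> M * norm2 (2 * E) w"
    using max_eigenvalue_variational[OF L] \<mu>(1) unfolding M_def by blast
  have bracket: "\<forall>\<^sub>F \<eta> in at_top. - ((M + \<epsilon>)\<^sup>2) \<le> low \<eta> \<and> low \<eta> \<le> - ((M - \<epsilon>)\<^sup>2)"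
    if "0 < \<epsilon>" "\<epsilon> < M" for \<epsilon>
    unfolding low_def by (rule eventually_lowest_eigenvalue_bracket[OF l P L vm bound that])
  have "\<forall>\<^sub>F \<eta> in at_top. low \<eta> < 0"
  proof (rule eventually_mono[OF bracket[of "M / 2"]])
    show "low \<eta> < 0" if "- ((M + M / 2)\<^sup>2) \<le> low \<eta> \<and> low \<eta> \<le> - ((M - M / 2)\<^sup>2)" for \<eta>
      using that zero_less_power2[of "M - M / 2"] M by linarith
  qed (use M in simp_all)
  moreover have "(low \<longlongrightarrow> - (M\<^sup>2)) at_top"
    using M bracket by (rule tendsto_of_shrinking_brackets)
  ultimately show ?thesis unfolding low_def M_def by simp
qed

end
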